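(* Let $\mathcal{G}=(V,E_L,E_R)$ be an achievement positional game and let $u,v\in V$ with $\{u\},\{v\}\notin E_L\cup E_R$, such that for every $e\in E_L\cup E_R$, $u\in e$ implies $v\in e$. Then: (i) $o(\mathcal{G}_u)\le_L o(\mathcal{G}_v)$; (ii) $o(\mathcal{G}^v)\le_L o(\mathcal{G}^u)$; (iii) if $u \neq v$, then $o(\mathcal{G}_u^v)\le_L o(\mathcal{G})\le_L o(\mathcal{G}_v^u)$.
   Context: A hypergraph is a pair $(V,E)$ with $V$ finite and $E\subseteq 2^V\setminus\{\varnothing\}$. An achievement positional game is a triple $\mathcal{G}=(V,E_L,E_R)$ where $(V,E_L)$ and $(V,E_R)$ are hypergraphs; elements of $E_L$ are blue edges, elements of $E_R$ are red edges. Two players, Left and Right, alternately pick a previously unpicked vertex of $V$ (either player may be designated to start). A player fills an edge when they have picked all its vertices. If Left fills a blue edge before Right fills a red edge, Left wins; if Right fills a red edge before Left fills a blue edge, Right wins; if neither happens before all vertices are picked, the game is a draw. For a set of edges $E$ and a set of vertices $S$, let $E^{+S}=\{e\setminus S : e\in E\}$ and $E^{-S}=\{e\in E : e\cap S=\varnothing\}$. If Left has picked the set $V_L$ and Right the set $V_R$, the updated game is $\mathcal{G}_{V_L}^{V_R}=(V\setminus(V_L\cup V_R),\,E_L^{+V_L-V_R},\,E_R^{+V_R-V_L})$; singleton brackets and empty sub/superscripts are omitted (so $\mathcal{G}_u$: Left picked $u$; $\mathcal{G}^v$: Right picked $v$; $\mathcal{G}_u^v$: Left picked $u$ and Right picked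 $v$). The outcome $o(\mathcal{G})$ is the pair (result under optimal play when Left starts, result under optimal play when Right starts). The partial order $\le_L$ on outcomes is the componentwise order, where in each component results are ordered Right wins $<$ draw $<$ Left wins. *)

theory Defs
  imports Main
begin

datatype result = RightWins | Draw | LeftWins

fun rank :: "result \<Rightarrow> nat" where
  "rank RightWins = 0" | "rank Draw = 1" | "rank LeftWins = 2"

instantiation result :: linorder
begin
definition less_eq_result :: "result \<Rightarrow> result \<Rightarrow> bool" where
  "less_eq_result a b \<longleftrightarrow> rank a \<le> rank b"
definition less_result :: "result \<Rightarrow> result \<Rightarrow> bool" where
  "less_result a b \<longleftrightarrow> rank a < rank b"
instance
proof
  fix x y z :: result
  show "x \<le> y \<Longrightarrow> y \<le> x \<Longrightarrow> x = y"
    by (cases x; cases y) (auto simp: less_eq_result_def)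
qed (auto simp: less_eq_result_def less_result_def)
end

type_synonym 'a game = "'a set \<times> 'a set set \<times> 'a set set"

definition hypergraph :: "'a set \<Rightarrow> 'a set set \<Rightarrow> bool" where
  "hypergraph V E \<longleftrightarrow> finite V \<and> (\<forall>e\<in>E. e \<subseteq> V \<and> e \<noteq> {})"

definition achievement_game :: "'a game \<Rightarrow> bool" where
  "achievement_game G = (case G of (V, EL, ER) \<Rightarrow> hypergraph V EL \<and> hypergraph V ER)"

definition eplus :: "'a set set \<Rightarrow> 'a set \<Rightarrow> 'a set set" where
  "eplus E S = (\<lambda>e. e - S) ` E"
definition eminus :: "'a set set \<Rightarrow> 'a set \<Rightarrow> 'a set set" where
  "eminus E S = {e \<in> E. e \<inter> S = {}}"

text \<open>Updated game G_{V_L}^{V_R}: Left picked VL, Right picked VR.\<close>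
definition upd :: "'a game \<Rightarrow> 'a set \<Rightarrow> 'a set \<Rightarrow> 'a game" where
  "upd G VL VR = (case G of (V, EL, ER) \<Rightarrow>
     (V - (VL \<union> VR), eminus (eplus EL VL) VR, eminus (eplus ER VR) VL))"

text \<open>Value of the game under optimal play, with fuel n (= number of remaining vertices).
  The boolean says whether Left is to move. A player who picks x fills an edge iff
  the (updated) edge set of that player contains {x}.\<close>
fun val :: "nat \<Rightarrow> bool \<Rightarrow> 'a game \<Rightarrow> result" where
  "val 0 p G = Draw"
| "val (Suc n) True (V, EL, ER) =
     (if V = {} then Draw else
       Max ((\<lambda>x. if {x} \<in> EL then LeftWins else val n False (upd (V, EL, ER) {x} {})) ` V))"
| "val (Suc n) False (V, EL, ER) =
     (if V = {} then Draw else
       Min ((\<lambda>x. if {x} \<in> ER then RightWins else val n True (upd (V, EL, ER) {} {x})) ` V))"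

text \<open>Outcome: (result when Left starts, result when Right starts).\<close>
definition outcome :: "'a game \<Rightarrow> result \<times> result" where
  "outcome G = (val (card (fst G)) True G, val (card (fst G)) False G)"

definition le_L :: "result \<times> result \<Rightarrow> result \<times> result \<Rightarrow> bool" where
  "le_L a b \<longleftrightarrow> fst a \<le> fst b \<and> snd a \<le> snd b"

end

theory Submission
  imports Defs "HOL-Combinatorics.Transposition"
begin

(* Everything rests on a monotonicity principle: if a bijection sigma of the free vertices
   sends every blue edge of G onto a superset of a blue edge of G', and every red edge of G'
   contains the image of a red edge of G, then G' is at least as good for Left, whoever moves
   first, because every move x in G can be answered by the move sigma x in G'.
   For (i) take sigma to be the transposition of u and v, which works because v lies in every
   edge through u.  For (iii), the identity shows that G_u^v is dominated by G_v^u; an induction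
   on the number of free vertices then gives G_u^v <= G: a move x outside {u, v} is copied in G,
   and if Right takes u or v in G, Left takes the other one and reaches G_v^u or G_u^v.
   (ii) and the second half of (iii) follow from (i) and the first half by exchanging colours. *)

section \<open>Updating a game\<close>

lemma upd_triple:
  "upd (V, EL, ER) A B = (V - (A \<union> B), eminus (eplus EL A) B, eminus (eplus ER B) A)"
  by (simp add: upd_def)

lemma eplus_empty [simp]: "eplus E {} = E"
  by (simp add: eplus_def)

lemma eminus_empty [simp]: "eminus E {} = E"
  by (simp add: eminus_def)

lemma mem_eplus: "e \<in> eplus E S \<longleftrightarrow> (\<exists>e0\<in>E. e = e0 - S)"
  by (auto simp: eplus_def)

lemma mem_eminus: "e \<in> eminus E S \<longleftrightarrow> e \<in> E \<and> e \<inter> S = {}"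
  by (simp add: eminus_def)

lemma ball_eplus_iff: "(\<forall>e\<in>eplus E S. P e) \<longleftrightarrow> (\<forall>e\<in>E. P (e - S))"
  by (simp add: eplus_def)

lemma ball_eminus_iff: "(\<forall>e\<in>eminus E S. P e) \<longleftrightarrow> (\<forall>e\<in>E. e \<inter> S = {} \<longrightarrow> P e)"
  by (auto simp: eminus_def)

lemma empty_in_eplus_singleton_iff: "{} \<in> eplus E {x} \<longleftrightarrow> {} \<in> E \<or> {x} \<in> E"
  by (auto simp: mem_eplus) (metis subset_singletonD)

lemma singleton_in_eplus_singleton_iff:
  assumes "y \<noteq> x"
  shows "{y} \<in> eplus E {x} \<longleftrightarrow> {y} \<in> E \<or> {x, y} \<in> E"
proof
  assume "{y} \<in> eplus E {x}"
  then obtain e where "e \<in> E" and "{y} = e - {x}"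
    by (auto simp: mem_eplus)
  then have "e = {y} \<or> e = {x, y}"
    using assms by blast
  with \<open>e \<in> E\<close> show "{y} \<in> E \<or> {x, y} \<in> E"
    by blast
next
  assume "{y} \<in> E \<or> {x, y} \<in> E"
  moreover have "{y} = {y} - {x}" and "{y} = {x, y} - {x}"
    using assms by auto
  ultimately show "{y} \<in> eplus E {x}"
    by (auto simp: mem_eplus)
qed

lemma eminus_eplus_eminus_eplus:
  "C \<inter> B = {} \<Longrightarrow> eminus (eplus (eminus (eplus E A) B) C) D = eminus (eplus E (A \<union> C)) (B \<union> D)"
proof (rule set_eqI)
  fix x assume CB: "C \<inter> B = {}"
  show "x \<in> eminus (eplus (eminus (eplus E A) B) C) D \<longleftrightarrow> x \<in> eminus (eplus E (A \<union> C)) (B \<union> D)"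
  proof
    assume "x \<in> eminus (eplus (eminus (eplus E A) B) C) D"
    then obtain e where "e \<in> E" "(e - A) \<inter> B = {}" "x = e - A - C" "x \<inter> D = {}"
      by (auto simp: mem_eplus mem_eminus)
    then show "x \<in> eminus (eplus E (A \<union> C)) (B \<union> D)"
      by (auto simp: mem_eplus mem_eminus Diff_Un)
  next
    assume "x \<in> eminus (eplus E (A \<union> C)) (B \<union> D)"
    then obtain e where e: "e \<in> E" "x = e - (A \<union> C)" "x \<inter> (B \<union> D) = {}"
      by (auto simp: mem_eplus mem_eminus)
    with CB have "e - A \<in> eminus (eplus E A) B"
      by (auto simp: mem_eminus mem_eplus)
    moreover from e have "x = (e - A) - C"
      by blast
    ultimately have "x \<in> eplus (eminus (eplus E A) B) C"
      by (auto simp: mem_eplus)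
    with e show "x \<in> eminus (eplus (eminus (eplus E A) B) C) D"
      by (auto simp: mem_eminus)
  qed
qed

lemma upd_upd:
  assumes "(A \<union> C) \<inter> (B \<union> D) = {}"
  shows "upd (upd G A B) C D = upd G (A \<union> C) (B \<union> D)"
proof (cases G)
  case (fields V EL ER)
  have "eminus (eplus (eminus (eplus EL A) B) C) D = eminus (eplus EL (A \<union> C)) (B \<union> D)"
    by (rule eminus_eplus_eminus_eplus) (use assms in blast)
  moreover have "eminus (eplus (eminus (eplus ER B) A) D) C = eminus (eplus ER (B \<union> D)) (A \<union> C)"
    by (rule eminus_eplus_eminus_eplus) (use assms in blast)
  moreover have "V - (A \<union> B) - (C \<union> D) = V - (A \<union> C \<union> (B \<union> D))"
    by blast
  ultimately show ?thesis
    by (simp add: fields upd_triple)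
qed

lemma upd_commute:
  "(A \<union> C) \<inter> (B \<union> D) = {} \<Longrightarrow> upd (upd G A B) C D = upd (upd G C D) A B"
  by (simp add: upd_upd Un_commute Int_commute)

section \<open>Values of positions\<close>

lemma le_LeftWins [simp]: "r \<le> LeftWins"
  by (cases r) (simp_all add: less_eq_result_def)

lemma RightWins_le [simp]: "RightWins \<le> r"
  by (cases r) (simp_all add: less_eq_result_def)

definition game_value :: "bool \<Rightarrow> 'a game \<Rightarrow> result" where
  "game_value p G = val (card (fst G)) p G"

lemma le_L_outcome_iff: "le_L (outcome G) (outcome H) \<longleftrightarrow> (\<forall>p. game_value p G \<le> game_value p H)"
  by (auto simp: le_L_def outcome_def game_value_def) (metis (full_types))

fun left_move_value :: "'a game \<Rightarrow> 'a \<Rightarrow> result" where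
  "left_move_value (V, EL, ER) x =
     (if {x} \<in> EL then LeftWins else game_value False (upd (V, EL, ER) {x} {}))"

fun right_move_value :: "'a game \<Rightarrow> 'a \<Rightarrow> result" where
  "right_move_value (V, EL, ER) x =
     (if {x} \<in> ER then RightWins else game_value True (upd (V, EL, ER) {} {x}))"

lemma game_value_empty [simp]: "game_value p ({}, EL, ER) = Draw"
  by (simp add: game_value_def)

lemma game_value_Left:
  assumes "finite V" and "V \<noteq> {}"
  shows "game_value True (V, EL, ER) = Max (left_move_value (V, EL, ER) ` V)"
proof -
  from assms obtain m where m: "card V = Suc m"
    by (cases "card V") auto
  with assms(1) have "game_value False (upd (V, EL, ER) {x} {}) = val m False (upd (V, EL, ER) {x} {})"
    if "x \<in> V" for x
    using that by (simp add: game_value_def upd_triple)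
  with assms(2) show ?thesis
    by (auto simp: game_value_def m intro!: arg_cong[where f = Max] image_cong)
qed

lemma game_value_Right:
  assumes "finite V" and "V \<noteq> {}"
  shows "game_value False (V, EL, ER) = Min (right_move_value (V, EL, ER) ` V)"
proof -
  from assms obtain m where m: "card V = Suc m"
    by (cases "card V") auto
  with assms(1) have "game_value True (upd (V, EL, ER) {} {x}) = val m True (upd (V, EL, ER) {} {x})"
    if "x \<in> V" for x
    using that by (simp add: game_value_def upd_triple)
  with assms(2) show ?thesis
    by (auto simp: game_value_def m intro!: arg_cong[where f = Min] image_cong)
qed

lemma game_value_Left_le_iff:
  "finite V \<Longrightarrow> V \<noteq> {} \<Longrightarrow>
     game_value True (V, EL, ER) \<le> r \<longleftrightarrow> (\<forall>x\<in>V. left_move_value (V, EL, ER) x \<le> r)"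
  by (simp add: game_value_Left del: left_move_value.simps)

lemma le_game_value_Right_iff:
  "finite V \<Longrightarrow> V \<noteq> {} \<Longrightarrow>
     r \<le> game_value False (V, EL, ER) \<longleftrightarrow> (\<forall>x\<in>V. r \<le> right_move_value (V, EL, ER) x)"
  by (simp add: game_value_Right del: right_move_value.simps)

lemma left_move_value_le_game_value:
  "finite V \<Longrightarrow> x \<in> V \<Longrightarrow> left_move_value (V, EL, ER) x \<le> game_value True (V, EL, ER)"
  by (subst game_value_Left) (auto simp del: left_move_value.simps)

lemma game_value_le_right_move_value:
  "finite V \<Longrightarrow> x \<in> V \<Longrightarrow> game_value False (V, EL, ER) \<le> right_move_value (V, EL, ER) x"
  by (subst game_value_Right) (auto simp del: right_move_value.simps)

section \<open>Exchanging the colours\<close>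

fun dual_result :: "result \<Rightarrow> result" where
  "dual_result RightWins = LeftWins"
| "dual_result Draw = Draw"
| "dual_result LeftWins = RightWins"

lemma dual_result_le_iff [simp]: "dual_result a \<le> dual_result b \<longleftrightarrow> b \<le> a"
  by (cases a; cases b) (simp_all add: less_eq_result_def)

lemma antimono_Max_commute:
  fixes f :: "'a::linorder \<Rightarrow> 'b::linorder"
  assumes "antimono f" and "finite A" and "A \<noteq> {}"
  shows "f (Max A) = Min (f ` A)"
proof (rule Min_eqI [symmetric])
  show "finite (f ` A)" and "f (Max A) \<in> f ` A"
    using assms(2,3) by simp_all
  show "f (Max A) \<le> y" if "y \<in> f ` A" for y
    using that assms by (auto intro: antimonoD)
qed

lemma antimono_Min_commute:
  fixes f :: "'a::linorder \<Rightarrow> 'b::linorder"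
  assumes "antimono f" and "finite A" and "A \<noteq> {}"
  shows "f (Min A) = Max (f ` A)"
proof (rule Max_eqI [symmetric])
  show "finite (f ` A)" and "f (Min A) \<in> f ` A"
    using assms(2,3) by simp_all
  show "y \<le> f (Min A)" if "y \<in> f ` A" for y
    using that assms by (auto intro: antimonoD)
qed

lemma antimono_dual_result: "antimono dual_result"
  by (rule antimonoI) simp

lemma game_value_swap_colours:
  "finite V \<Longrightarrow> game_value p (V, EL, ER) = dual_result (game_value (\<not> p) (V, ER, EL))"
proof (induction "card V" arbitrary: V EL ER p rule: less_induct)
  case less
  show ?case
  proof (cases "V = {}")
    case True
    then show ?thesis by simp
  next
    case nonempty: False
    have card_less: "card (V - {x}) < card V" if "x \<in> V" for x
      using less.prems that by (rule card_Diff1_less)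
    have left: "left_move_value (V, EL, ER) x = dual_result (right_move_value (V, ER, EL) x)"
      if "x \<in> V" for x
      using less.hyps[OF card_less[OF that], where ER = "eminus ER {x}" and EL = "eplus EL {x}" and p = False] less.prems
      by (simp add: upd_triple)
    have right: "right_move_value (V, EL, ER) x = dual_result (left_move_value (V, ER, EL) x)"
      if "x \<in> V" for x
      using less.hyps[OF card_less[OF that], where ER = "eplus ER {x}" and EL = "eminus EL {x}" and p = True] less.prems
      by (simp add: upd_triple)
    show ?thesis
    proof (cases p)
      case True
      have "game_value p (V, EL, ER) = Max ((dual_result \<circ> right_move_value (V, ER, EL)) ` V)"
        using True left less.prems nonempty by (simp add: game_value_Left del: left_move_value.simps)
      also have "\<dots> = dual_result (Min (right_move_value (V, ER, EL) ` V))"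
        using antimono_Min_commute[OF antimono_dual_result, of "right_move_value (V, ER, EL) ` V"]
          less.prems nonempty
        by (simp add: image_comp del: right_move_value.simps)
      finally show ?thesis
        using True less.prems nonempty by (simp add: game_value_Right del: right_move_value.simps)
    next
      case False
      have "game_value p (V, EL, ER) = Min ((dual_result \<circ> left_move_value (V, ER, EL)) ` V)"
        using False right less.prems nonempty by (simp add: game_value_Right del: right_move_value.simps)
      also have "\<dots> = dual_result (Max (left_move_value (V, ER, EL) ` V))"
        using antimono_Max_commute[OF antimono_dual_result, of "left_move_value (V, ER, EL) ` V"]
          less.prems nonempty
        by (simp add: image_comp del: left_move_value.simps)
      finally show ?thesis
        using False less.prems nonempty by (simp add: game_value_Left del: left_move_value.simps)
    qed
  qed
qed

lemma game_value_upd_swap_colours: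
  "finite V \<Longrightarrow> game_value p (upd (V, EL, ER) A B) = dual_result (game_value (\<not> p) (upd (V, ER, EL) B A))"
  using game_value_swap_colours[where V = "V - (A \<union> B)" and EL = "eminus (eplus EL A) B" and ER = "eminus (eplus ER B) A"]
  by (simp add: upd_triple Un_commute)

section \<open>Domination\<close>

fun dominates :: "('a \<Rightarrow> 'b) \<Rightarrow> 'a game \<Rightarrow> 'b game \<Rightarrow> bool" where
  "dominates \<sigma> (V, EL, ER) (V', EL', ER') \<longleftrightarrow>
     bij_betw \<sigma> V V' \<and> (\<forall>e\<in>EL. \<exists>e'\<in>EL'. e' \<subseteq> \<sigma> ` e) \<and> (\<forall>f'\<in>ER'. \<exists>f\<in>ER. \<sigma> ` f \<subseteq> f')"

lemma bij_betw_remove: "bij_betw \<sigma> V V' \<Longrightarrow> x \<in> V \<Longrightarrow> bij_betw \<sigma> (V - {x}) (V' - {\<sigma> x})"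
  by (rule bij_betw_DiffI) (auto simp: bij_betw_def)

lemma dominates_upd_Left:
  assumes "inj \<sigma>" and "x \<in> V" and "dominates \<sigma> (V, EL, ER) (V', EL', ER')"
  shows "dominates \<sigma> (upd (V, EL, ER) {x} {}) (upd (V', EL', ER') {\<sigma> x} {})"
proof -
  have "\<exists>e'\<in>eplus EL' {\<sigma> x}. e' \<subseteq> \<sigma> ` e" if "e \<in> eplus EL {x}" for e
  proof -
    from that obtain e0 where "e0 \<in> EL" and e: "e = e0 - {x}"
      by (auto simp: mem_eplus)
    with assms(3) obtain e' where "e' \<in> EL'" and "e' \<subseteq> \<sigma> ` e0"
      by auto
    then have "e' - {\<sigma> x} \<in> eplus EL' {\<sigma> x}" and "e' - {\<sigma> x} \<subseteq> \<sigma> ` e"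
      using e image_set_diff[OF assms(1)] by (auto simp: mem_eplus)
    then show ?thesis ..
  qed
  moreover have "\<exists>f\<in>eminus ER {x}. \<sigma> ` f \<subseteq> f'" if "f' \<in> eminus ER' {\<sigma> x}" for f'
  proof -
    from that have "f' \<in> ER'" and "\<sigma> x \<notin> f'"
      by (auto simp: mem_eminus)
    with assms(3) obtain f where "f \<in> ER" and "\<sigma> ` f \<subseteq> f'"
      by auto
    moreover from \<open>\<sigma> ` f \<subseteq> f'\<close> \<open>\<sigma> x \<notin> f'\<close> have "x \<notin> f"
      by blast
    ultimately have "f \<in> eminus ER {x}" and "\<sigma> ` f \<subseteq> f'"
      by (simp_all add: mem_eminus)
    then show ?thesis ..
  qed
  ultimately show ?thesis
    using assms(2,3) by (simp add: upd_triple bij_betw_remove)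
qed

lemma dominates_upd_Right:
  assumes "inj \<sigma>" and "x \<in> V" and "dominates \<sigma> (V, EL, ER) (V', EL', ER')"
  shows "dominates \<sigma> (upd (V, EL, ER) {} {x}) (upd (V', EL', ER') {} {\<sigma> x})"
proof -
  have "\<exists>e'\<in>eminus EL' {\<sigma> x}. e' \<subseteq> \<sigma> ` e" if "e \<in> eminus EL {x}" for e
  proof -
    from that have "e \<in> EL" and "x \<notin> e"
      by (auto simp: mem_eminus)
    with assms(3) obtain e' where "e' \<in> EL'" and "e' \<subseteq> \<sigma> ` e"
      by auto
    moreover from \<open>x \<notin> e\<close> assms(1) have "\<sigma> x \<notin> \<sigma> ` e"
      by (auto dest: injD)
    ultimately have "e' \<in> eminus EL' {\<sigma> x}" and "e' \<subseteq> \<sigma> ` e"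
      by (auto simp: mem_eminus)
    then show ?thesis ..
  qed
  moreover have "\<exists>f\<in>eplus ER {x}. \<sigma> ` f \<subseteq> f'" if "f' \<in> eplus ER' {\<sigma> x}" for f'
  proof -
    from that obtain f0 where "f0 \<in> ER'" and f': "f' = f0 - {\<sigma> x}"
      by (auto simp: mem_eplus)
    with assms(3) obtain f where "f \<in> ER" and "\<sigma> ` f \<subseteq> f0"
      by auto
    then have "f - {x} \<in> eplus ER {x}" and "\<sigma> ` (f - {x}) \<subseteq> f'"
      using f' image_set_diff[OF assms(1)] by (auto simp: mem_eplus)
    then show ?thesis ..
  qed
  ultimately show ?thesis
    using assms(2,3) by (simp add: upd_triple bij_betw_remove)
qed

lemma dominates_singleton_Left:
  "dominates \<sigma> (V, EL, ER) (V', EL', ER') \<Longrightarrow> {} \<notin> EL' \<Longrightarrow> {x} \<in> EL \<Longrightarrow> {\<sigma> x} \<in> EL'"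
  by (fastforce dest: subset_singletonD)

lemma dominates_singleton_Right:
  assumes "inj \<sigma>" and "dominates \<sigma> (V, EL, ER) (V', EL', ER')" and "{} \<notin> ER" and "{\<sigma> x} \<in> ER'"
  shows "{x} \<in> ER"
proof -
  from assms(2,4) obtain f where "f \<in> ER" and "\<sigma> ` f \<subseteq> {\<sigma> x}"
    by auto
  with assms(1) have "f \<subseteq> {x}"
    by (auto dest: injD)
  with \<open>f \<in> ER\<close> assms(3) show ?thesis
    by (metis subset_singletonD)
qed

(* Injectivity of sigma on the whole type, rather than on the free vertices only, spares us
   any assumption that the edges lie inside the vertex set. *)

theorem game_value_mono_dominates:
  assumes "inj \<sigma>" and "finite V" and "dominates \<sigma> (V, EL, ER) (V', EL', ER')"
    and "{} \<notin> ER" and "{} \<notin> EL'"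
  shows "game_value p (V, EL, ER) \<le> game_value p (V', EL', ER')"
  using assms(2-)
proof (induction "card V" arbitrary: V EL ER V' EL' ER' p rule: less_induct)
  case less
  from less.prems(2) have V': "V' = \<sigma> ` V"
    by (simp add: bij_betw_def)
  show ?case
  proof (cases "V = {}")
    case True
    with V' show ?thesis by simp
  next
    case nonempty: False
    have left: "left_move_value (V, EL, ER) x \<le> left_move_value (V', EL', ER') (\<sigma> x)"
      if "x \<in> V" for x
    proof (cases "{\<sigma> x} \<in> EL'")
      case True
      then show ?thesis by simp
    next
      case False
      then have "{x} \<notin> EL"
        using dominates_singleton_Left[OF less.prems(2,4)] by blast
      have dom: "dominates \<sigma> (V - {x}, eplus EL {x}, eminus ER {x}) (V' - {\<sigma> x}, eplus EL' {\<sigma> x}, eminus ER' {\<sigma> x})"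
        using dominates_upd_Left[OF assms(1) that less.prems(2)] by (simp add: upd_triple)
      have "game_value False (V - {x}, eplus EL {x}, eminus ER {x})
          \<le> game_value False (V' - {\<sigma> x}, eplus EL' {\<sigma> x}, eminus ER' {\<sigma> x})"
      proof (rule less.hyps)
        show "card (V - {x}) < card V"
          using less.prems(1) that by (rule card_Diff1_less)
        show "{} \<notin> eminus ER {x}" and "{} \<notin> eplus EL' {\<sigma> x}"
          using less.prems(3,4) False by (simp_all add: mem_eminus empty_in_eplus_singleton_iff)
      qed (simp_all only: finite_Diff less.prems(1) dom)
      with False \<open>{x} \<notin> EL\<close> show ?thesis
        by (simp add: upd_triple)
    qed
    have right: "right_move_value (V, EL, ER) x \<le> right_move_value (V', EL', ER') (\<sigma> x)"
      if "x \<in> V" for x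
    proof (cases "{x} \<in> ER")
      case True
      then show ?thesis by simp
    next
      case False
      then have "{\<sigma> x} \<notin> ER'"
        using dominates_singleton_Right[OF assms(1) less.prems(2,3)] by blast
      have dom: "dominates \<sigma> (V - {x}, eminus EL {x}, eplus ER {x}) (V' - {\<sigma> x}, eminus EL' {\<sigma> x}, eplus ER' {\<sigma> x})"
        using dominates_upd_Right[OF assms(1) that less.prems(2)] by (simp add: upd_triple)
      have "game_value True (V - {x}, eminus EL {x}, eplus ER {x})
          \<le> game_value True (V' - {\<sigma> x}, eminus EL' {\<sigma> x}, eplus ER' {\<sigma> x})"
      proof (rule less.hyps)
        show "card (V - {x}) < card V"
          using less.prems(1) that by (rule card_Diff1_less)
        show "{} \<notin> eplus ER {x}" and "{} \<notin> eminus EL' {\<sigma> x}"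
          using less.prems(3,4) False by (simp_all add: mem_eminus empty_in_eplus_singleton_iff)
      qed (simp_all only: finite_Diff less.prems(1) dom)
      with False \<open>{\<sigma> x} \<notin> ER'\<close> show ?thesis
        by (simp add: upd_triple)
    qed
    have "finite V'" and "V' \<noteq> {}"
      using V' less.prems(1) nonempty by simp_all
    show ?thesis
    proof (cases p)
      case True
      have "left_move_value (V, EL, ER) x \<le> game_value True (V', EL', ER')" if "x \<in> V" for x
        using V' that \<open>finite V'\<close> by (intro order_trans[OF left[OF that] left_move_value_le_game_value]) simp_all
      with True less.prems(1) nonempty show ?thesis
        by (simp add: game_value_Left_le_iff)
    next
      case False
      have "game_value False (V, EL, ER) \<le> right_move_value (V', EL', ER') (\<sigma> x)" if "x \<in> V" for x
        using less.prems(1) that by (intro order_trans[OF game_value_le_right_move_value right[OF that]])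
      with False V' \<open>finite V'\<close> \<open>V' \<noteq> {}\<close> show ?thesis
        by (simp add: le_game_value_Right_iff del: right_move_value.simps)
    qed
  qed
qed

section \<open>Comparing picks of u and v\<close>

lemma game_value_Left_pick_le:
  assumes "finite V" and "u \<in> V" and "v \<in> V" and "{} \<notin> EL" and "{} \<notin> ER" and "{v} \<notin> EL"
    and dom: "\<forall>e\<in>EL \<union> ER. u \<in> e \<longrightarrow> v \<in> e"
  shows "game_value p (upd (V, EL, ER) {u} {}) \<le> game_value p (upd (V, EL, ER) {v} {})"
proof -
  let ?\<sigma> = "transpose u v"
  have "?\<sigma> ` (V - {u}) = V - {v}"
    using assms(2,3) by (simp add: image_set_diff[OF inj_transpose])
  then have "bij_betw ?\<sigma> (V - {u}) (V - {v})"
    by (simp add: bij_betw_def)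
  moreover have "\<exists>e'\<in>eplus EL {v}. e' \<subseteq> ?\<sigma> ` e" if "e \<in> eplus EL {u}" for e
  proof -
    from that obtain e0 where "e0 \<in> EL" and e: "e = e0 - {u}"
      by (auto simp: mem_eplus)
    moreover from dom \<open>e0 \<in> EL\<close> have "u \<in> e0 \<Longrightarrow> v \<in> e0"
      by blast
    ultimately have "e0 - {v} \<subseteq> ?\<sigma> ` e"
      by (auto simp: in_transpose_image_iff transpose_def)
    moreover from \<open>e0 \<in> EL\<close> have "e0 - {v} \<in> eplus EL {v}"
      by (auto simp: mem_eplus)
    ultimately show ?thesis
      by blast
  qed
  moreover have "\<exists>f\<in>eminus ER {u}. ?\<sigma> ` f \<subseteq> f'" if "f' \<in> eminus ER {v}" for f'
  proof -
    from that have "f' \<in> ER" and "v \<notin> f'"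
      by (simp_all add: mem_eminus)
    with dom have "u \<notin> f'"
      by blast
    with \<open>f' \<in> ER\<close> \<open>v \<notin> f'\<close> have "f' \<in> eminus ER {u}" and "?\<sigma> ` f' = f'"
      by (simp_all add: mem_eminus)
    then show ?thesis
      by auto
  qed
  ultimately have "dominates ?\<sigma> (upd (V, EL, ER) {u} {}) (upd (V, EL, ER) {v} {})"
    by (simp add: upd_triple)
  moreover have "{} \<notin> eminus ER {u}" and "{} \<notin> eplus EL {v}"
    using assms(4-6) by (simp_all add: mem_eminus empty_in_eplus_singleton_iff)
  ultimately show ?thesis
    using assms(1) by (simp add: upd_triple game_value_mono_dominates[OF inj_transpose])
qed

lemma game_value_pick_pair_le_swapped:
  assumes "finite V" and "u \<noteq> v" and "{} \<notin> EL" and "{} \<notin> ER" and "{v} \<notin> EL" and "{v} \<notin> ER"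
    and dom: "\<forall>e\<in>EL \<union> ER. u \<in> e \<longrightarrow> v \<in> e"
  shows "game_value p (upd (V, EL, ER) {u} {v}) \<le> game_value p (upd (V, EL, ER) {v} {u})"
proof -
  have "\<exists>e'\<in>eminus (eplus EL {v}) {u}. e' \<subseteq> e" if "e \<in> eminus (eplus EL {u}) {v}" for e
  proof -
    from that obtain e0 where "e0 \<in> EL" and "e = e0 - {u}" and "v \<notin> e0"
      using assms(2) by (auto simp: mem_eplus mem_eminus)
    with dom have "e \<in> eminus (eplus EL {v}) {u}"
      by (auto simp: mem_eplus mem_eminus)
    then show ?thesis
      by blast
  qed
  moreover have "\<exists>f\<in>eminus (eplus ER {v}) {u}. f \<subseteq> f'" if "f' \<in> eminus (eplus ER {u}) {v}" for f'
  proof -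
    from that obtain f0 where "f0 \<in> ER" and "f' = f0 - {u}" and "v \<notin> f0"
      using assms(2) by (auto simp: mem_eplus mem_eminus)
    with dom have "f' \<in> eminus (eplus ER {v}) {u}"
      by (auto simp: mem_eplus mem_eminus)
    then show ?thesis
      by blast
  qed
  ultimately have "dominates id (upd (V, EL, ER) {u} {v}) (upd (V, EL, ER) {v} {u})"
    by (auto simp: upd_triple insert_commute)
  moreover have "{} \<notin> eminus (eplus ER {v}) {u}" and "{} \<notin> eminus (eplus EL {v}) {u}"
    using assms(3-6) by (simp_all add: mem_eminus empty_in_eplus_singleton_iff)
  ultimately show ?thesis
    using assms(1) by (simp add: upd_triple game_value_mono_dominates[OF inj_on_id])
qed

lemma game_value_pick_pair_le_Left_step:
  assumes fin: "finite V" and uv: "u \<noteq> v" and "u \<in> V" and "v \<in> V"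
    and dom: "\<forall>e\<in>EL \<union> ER. u \<in> e \<longrightarrow> v \<in> e"
    and IH: "\<And>x. x \<in> V - {u, v} \<Longrightarrow> {x} \<notin> EL \<Longrightarrow>
       game_value False (upd (upd (V, EL, ER) {x} {}) {u} {v}) \<le> game_value False (upd (V, EL, ER) {x} {})"
  shows "game_value True (upd (V, EL, ER) {u} {v}) \<le> game_value True (V, EL, ER)"
proof -
  define EL' ER' where "EL' = eminus (eplus EL {u}) {v}" and "ER' = eminus (eplus ER {v}) {u}"
  have G': "upd (V, EL, ER) {u} {v} = (V - {u, v}, EL', ER')"
    by (auto simp: upd_triple EL'_def ER'_def)
  show ?thesis
  proof (cases "V - {u, v} = {}")
    case True
    \<comment> \<open>Then G_u^v is a draw, while in G Left can take v and leave Right only u.\<close>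
    then have "V - {v} = {u}"
      using assms(3,4) uv by blast
    moreover from dom uv have "{u} \<notin> ER"
      by auto
    ultimately have "game_value False (upd (V, EL, ER) {v} {}) = Draw"
      by (simp add: upd_triple game_value_Right mem_eminus)
    then have "Draw \<le> left_move_value (V, EL, ER) v"
      by simp
    also have "\<dots> \<le> game_value True (V, EL, ER)"
      using fin assms(4) by (rule left_move_value_le_game_value)
    finally show ?thesis
      by (simp only: G' True game_value_empty)
  next
    case False
    have "left_move_value (V - {u, v}, EL', ER') x \<le> left_move_value (V, EL, ER) x"
      if x: "x \<in> V - {u, v}" for x
    proof (cases "{x} \<in> EL")
      case True
      then show ?thesis by simp
    next
      case False
      have "{x} \<notin> EL'"
      proof
        assume "{x} \<in> EL'"
        then obtain e0 where "e0 \<in> EL" and "{x} = e0 - {u}" and "v \<notin> e0"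
          using uv by (auto simp: EL'_def mem_eplus mem_eminus)
        with dom have "e0 = {x}"
          by blast
        with \<open>e0 \<in> EL\<close> False show False
          by simp
      qed
      moreover have "upd (V - {u, v}, EL', ER') {x} {} = upd (upd (V, EL, ER) {x} {}) {u} {v}"
        using x uv by (simp add: G' [symmetric] upd_commute)
      ultimately show ?thesis
        using IH[OF x False] False by simp
    qed
    then have "\<forall>x\<in>V - {u, v}. left_move_value (V - {u, v}, EL', ER') x \<le> game_value True (V, EL, ER)"
      using fin by (blast intro: order_trans left_move_value_le_game_value)
    with fin False show ?thesis
      by (simp add: G' game_value_Left_le_iff del: left_move_value.simps)
  qed
qed

lemma game_value_pick_pair_le_Right_picks_u:
  assumes "finite V" and uv: "u \<noteq> v" and "v \<in> V"
    and "{} \<notin> EL" and "{} \<notin> ER" and "{v} \<notin> ER"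
    and dom: "\<forall>e\<in>EL \<union> ER. u \<in> e \<longrightarrow> v \<in> e"
  shows "game_value False (upd (V, EL, ER) {u} {v}) \<le> game_value True (upd (V, EL, ER) {} {u})"
proof -
  have G_u: "upd (V, EL, ER) {} {u} = (V - {u}, eminus EL {u}, eplus ER {u})"
    by (simp add: upd_triple)
  have "game_value False (upd (V, EL, ER) {u} {v}) \<le> left_move_value (V - {u}, eminus EL {u}, eplus ER {u}) v"
  proof (cases "{v} \<in> EL")
    case True
    with uv show ?thesis
      by (simp add: mem_eminus)
  next
    case False
    have "upd (V - {u}, eminus EL {u}, eplus ER {u}) {v} {} = upd (V, EL, ER) {v} {u}"
      using uv by (simp add: G_u [symmetric] upd_upd)
    moreover have "game_value False (upd (V, EL, ER) {u} {v}) \<le> game_value False (upd (V, EL, ER) {v} {u})"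
      using assms(1) uv assms(4,5) False assms(6) dom by (rule game_value_pick_pair_le_swapped)
    ultimately show ?thesis
      using False by (simp add: mem_eminus)
  qed
  also have "\<dots> \<le> game_value True (upd (V, EL, ER) {} {u})"
    unfolding G_u using assms(1,3) uv by (intro left_move_value_le_game_value) simp_all
  finally show ?thesis .
qed

lemma game_value_pick_pair_le_Right_picks_v:
  assumes "finite V" and uv: "u \<noteq> v" and "u \<in> V" and "{u} \<notin> EL"
  shows "game_value False (upd (V, EL, ER) {u} {v}) \<le> game_value True (upd (V, EL, ER) {} {v})"
proof -
  have G_v: "upd (V, EL, ER) {} {v} = (V - {v}, eminus EL {v}, eplus ER {v})"
    by (simp add: upd_triple)
  have "upd (V - {v}, eminus EL {v}, eplus ER {v}) {u} {} = upd (V, EL, ER) {u} {v}"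
    using uv by (simp add: G_v [symmetric] upd_upd)
  then have "game_value False (upd (V, EL, ER) {u} {v}) = left_move_value (V - {v}, eminus EL {v}, eplus ER {v}) u"
    using assms(4) by (simp add: mem_eminus)
  also have "\<dots> \<le> game_value True (upd (V, EL, ER) {} {v})"
    unfolding G_v using assms(1,3) uv by (intro left_move_value_le_game_value) simp_all
  finally show ?thesis .
qed

lemma game_value_pick_pair_le_Right_step:
  assumes fin: "finite V" and uv: "u \<noteq> v" and "u \<in> V" and "v \<in> V"
    and "{} \<notin> EL" and "{} \<notin> ER" and "{v} \<notin> ER"
    and dom: "\<forall>e\<in>EL \<union> ER. u \<in> e \<longrightarrow> v \<in> e"
    and IH: "\<And>x. x \<in> V - {u, v} \<Longrightarrow> {x} \<notin> ER \<Longrightarrow> {x, v} \<notin> ER \<Longrightarrow>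
       game_value True (upd (upd (V, EL, ER) {} {x}) {u} {v}) \<le> game_value True (upd (V, EL, ER) {} {x})"
  shows "game_value False (upd (V, EL, ER) {u} {v}) \<le> game_value False (V, EL, ER)"
proof -
  define EL' ER' where "EL' = eminus (eplus EL {u}) {v}" and "ER' = eminus (eplus ER {v}) {u}"
  have G': "upd (V, EL, ER) {u} {v} = (V - {u, v}, EL', ER')"
    by (auto simp: upd_triple EL'_def ER'_def)
  from dom uv have "{u} \<notin> EL" and "{u} \<notin> ER"
    by auto
  have "game_value False (upd (V, EL, ER) {u} {v}) \<le> right_move_value (V, EL, ER) x" if x: "x \<in> V" for x
  proof -
    consider "x = u" | "x = v" | "x \<in> V - {u, v}"
      using x by blast
    then show ?thesis
    proof cases
      case 1
      with game_value_pick_pair_le_Right_picks_u[OF fin uv assms(4-8)] \<open>{u} \<notin> ER\<close> show ?thesis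
        by simp
    next
      case 2
      with game_value_pick_pair_le_Right_picks_v[OF fin uv assms(3) \<open>{u} \<notin> EL\<close>] assms(7) show ?thesis
        by simp
    next
      case 3
      have "right_move_value (V - {u, v}, EL', ER') x \<le> right_move_value (V, EL, ER) x"
      proof (cases "{x} \<in> ER'")
        case True
        then show ?thesis by simp
      next
        case False
        with 3 uv have "{x} \<notin> ER" and "{x, v} \<notin> ER"
          by (auto simp: ER'_def mem_eplus mem_eminus)
        moreover have "upd (V - {u, v}, EL', ER') {} {x} = upd (upd (V, EL, ER) {} {x}) {u} {v}"
          using 3 uv by (simp add: G' [symmetric] upd_commute)
        ultimately show ?thesis
          using IH[OF 3] False by simp
      qed
      moreover have "game_value False (V - {u, v}, EL', ER') \<le> right_move_value (V - {u, v}, EL', ER') x"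
        using fin 3 by (intro game_value_le_right_move_value) simp_all
      ultimately show ?thesis
        unfolding G' by (rule order_trans[rotated])
    qed
  qed
  moreover from assms(3) have "V \<noteq> {}"
    by blast
  ultimately show ?thesis
    using fin by (simp add: le_game_value_Right_iff del: right_move_value.simps)
qed

lemma game_value_pick_pair_le:
  assumes "finite V" and "u \<noteq> v" and "u \<in> V" and "v \<in> V"
    and "{} \<notin> EL" and "{} \<notin> ER" and "{v} \<notin> ER"
    and "\<forall>e\<in>EL \<union> ER. u \<in> e \<longrightarrow> v \<in> e"
  shows "game_value p (upd (V, EL, ER) {u} {v}) \<le> game_value p (V, EL, ER)"
  using assms
proof (induction "card V" arbitrary: V EL ER p rule: less_induct)
  case less
  note fin = less.prems(1) and uv = less.prems(2) and dom = less.prems(8)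
  have card_less: "card (V - {x}) < card V" if "x \<in> V" for x
    using fin that by (rule card_Diff1_less)
  show ?case
  proof (cases p)
    case True
    have "game_value False (upd (upd (V, EL, ER) {x} {}) {u} {v}) \<le> game_value False (upd (V, EL, ER) {x} {})"
      if x: "x \<in> V - {u, v}" and "{x} \<notin> EL" for x
      unfolding upd_triple[of V EL ER "{x}" "{}"] Un_empty_right eminus_empty eplus_empty
    proof (rule less.hyps)
      show "\<forall>e\<in>eplus EL {x} \<union> eminus ER {x}. u \<in> e \<longrightarrow> v \<in> e"
        using dom x by (auto simp: ball_Un ball_eplus_iff ball_eminus_iff)
      show "{} \<notin> eplus EL {x}"
        using less.prems(5) \<open>{x} \<notin> EL\<close> by (simp add: empty_in_eplus_singleton_iff)
      show "{} \<notin> eminus ER {x}" and "{v} \<notin> eminus ER {x}"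
        using less.prems(6,7) by (simp_all add: mem_eminus)
    qed (use fin uv less.prems(3,4) x card_less in auto)
    with True show ?thesis
      using game_value_pick_pair_le_Left_step[OF fin uv less.prems(3,4) dom] by simp
  next
    case False
    have "game_value True (upd (upd (V, EL, ER) {} {x}) {u} {v}) \<le> game_value True (upd (V, EL, ER) {} {x})"
      if x: "x \<in> V - {u, v}" and "{x} \<notin> ER" and "{x, v} \<notin> ER" for x
      unfolding upd_triple[of V EL ER "{}" "{x}"] Un_empty_left eminus_empty eplus_empty
    proof (rule less.hyps)
      show "\<forall>e\<in>eminus EL {x} \<union> eplus ER {x}. u \<in> e \<longrightarrow> v \<in> e"
        using dom x by (auto simp: ball_Un ball_eplus_iff ball_eminus_iff)
      show "{} \<notin> eplus ER {x}"
        using less.prems(6) \<open>{x} \<notin> ER\<close> by (simp add: empty_in_eplus_singleton_iff)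
      show "{v} \<notin> eplus ER {x}"
        using less.prems(7) \<open>{x, v} \<notin> ER\<close> x by (subst singleton_in_eplus_singleton_iff) auto
      show "{} \<notin> eminus EL {x}"
        using less.prems(5) by (simp add: mem_eminus)
    qed (use fin uv less.prems(3,4) x card_less in auto)
    with False show ?thesis
      using game_value_pick_pair_le_Right_step[OF less.prems] by simp
  qed
qed

theorem lemma8:
  fixes V :: "'a set" and EL ER :: "'a set set" and u v :: 'a
  assumes "achievement_game (V, EL, ER)"
    and "u \<in> V" and "v \<in> V"
    and "{u} \<notin> EL \<union> ER" and "{v} \<notin> EL \<union> ER"
    and "\<forall>e \<in> EL \<union> ER. u \<in> e \<longrightarrow> v \<in> e"
  shows "le_L (outcome (upd (V, EL, ER) {u} {})) (outcome (upd (V, EL, ER) {v} {}))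
       \<and> le_L (outcome (upd (V, EL, ER) {} {v})) (outcome (upd (V, EL, ER) {} {u}))
       \<and> (u \<noteq> v \<longrightarrow> le_L (outcome (upd (V, EL, ER) {u} {v})) (outcome (V, EL, ER))
                     \<and> le_L (outcome (V, EL, ER)) (outcome (upd (V, EL, ER) {v} {u})))"
proof -
  from assms(1) have fin: "finite V" and "{} \<notin> EL" and "{} \<notin> ER"
    by (auto simp: achievement_game_def hypergraph_def)
  from assms(5) have "{v} \<notin> EL" and "{v} \<notin> ER"
    by auto
  from assms(6) have dom_swapped: "\<forall>e\<in>ER \<union> EL. u \<in> e \<longrightarrow> v \<in> e"
    by blast
  have i: "game_value p (upd (V, EL, ER) {u} {}) \<le> game_value p (upd (V, EL, ER) {v} {})" for p
    by (rule game_value_Left_pick_le) fact+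
  have ii: "game_value p (upd (V, EL, ER) {} {v}) \<le> game_value p (upd (V, EL, ER) {} {u})" for p
  proof -
    have "game_value (\<not> p) (upd (V, ER, EL) {u} {}) \<le> game_value (\<not> p) (upd (V, ER, EL) {v} {})"
      by (rule game_value_Left_pick_le) fact+
    then show ?thesis
      by (simp add: game_value_upd_swap_colours[OF fin, of p EL ER "{}"])
  qed
  have iii: "game_value p (upd (V, EL, ER) {u} {v}) \<le> game_value p (V, EL, ER)
      \<and> game_value p (V, EL, ER) \<le> game_value p (upd (V, EL, ER) {v} {u})" if "u \<noteq> v" for p
  proof
    show "game_value p (upd (V, EL, ER) {u} {v}) \<le> game_value p (V, EL, ER)"
      by (rule game_value_pick_pair_le) fact+
    have "game_value (\<not> p) (upd (V, ER, EL) {u} {v}) \<le> game_value (\<not> p) (V, ER, EL)"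
      by (rule game_value_pick_pair_le) fact+
    then show "game_value p (V, EL, ER) \<le> game_value p (upd (V, EL, ER) {v} {u})"
      by (simp add: game_value_upd_swap_colours[OF fin, of p EL ER "{v}"] game_value_swap_colours[OF fin, of p EL ER])
  qed
  show ?thesis
    unfolding le_L_outcome_iff using i ii iii by blast
qed

end
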